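(* Let $Q(z)\not\equiv0$ be a $k\times k$ Hermite matrix of Laurent polynomials that is diagonally dominant and satisfies $\operatorname{len}(Q_{1,1})\le\dots\le\operatorname{len}(Q_{k,k})$. Let $b(z)$ be a column vector of $k$ Laurent polynomials such that $\operatorname{ldeg}(b_\ell)\ge\operatorname{ldeg}(Q_{\ell,\ell})$ for every $\ell$ with $b_\ell\not\equiv0$. Then there exists a column vector $X(z)$ of $k$ Laurent polynomials such that $Y(z):=b(z)-Q(z)X(z)$ satisfies, for all $\ell=1,\dots,k$, $$\operatorname{fs}(Y_\ell)\subsetneq\operatorname{fs}(Q_{\ell,\ell})\quad\text{and}\quad\deg(Y_\ell)<\deg(Q_{\ell,\ell}).$$
   Context: For a matrix $U(z)=\sum_kU_kz^k$ of Laurent polynomials, $U^\star(z):=\sum_k\overline{U_k}^Tz^{-k}$; Hermite means $Q^\star=Q$. For a Laurent polynomial $u\not\equiv0$: $\deg(u)$ is its highest degree, $\operatorname{ldeg}(u)$ its lowest degree, $\operatorname{len}(u):=\deg(u)-\operatorname{ldeg}(u)$, $\operatorname{fs}(u):=[\operatorname{ldeg}(u),\deg(u)]$; for $u\equiv0$, $\operatorname{len}(u)=\deg(u):=-\infty$ and $\operatorname{fs}(u):=\emptyset$. A $k\times k$ matrix $Q$ of Laurent polynomials is diagonally dominant at the diagonal entry $s$ if (1) for all $i\ne s$: $\operatorname{fs}(Q_{i,s})\subsetneq\operatorname{fs}(Q_{s,s})$ and $\operatorname{fs}(Q_{s,i})\subsetneq\operatorname{fs}(Q_{s,s})$; (2)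 for all $i>s$: $\deg(Q_{s,i})<\deg(Q_{s,s})$. $Q$ is diagonally dominant if this holds at every diagonal entry. *)

theory Defs
  imports Complex_Main "HOL-Library.Poly_Mapping" "HOL-Library.Extended_Real"
begin

text \<open>Laurent polynomials over the complex numbers: finitely supported maps
  from the exponent (an integer) to the coefficient; multiplication is convolution.\<close>
type_synonym lpoly = "int \<Rightarrow>\<^sub>0 complex"

definition lstar :: "lpoly \<Rightarrow> lpoly" where
  "lstar u = Abs_poly_mapping (\<lambda>n. cnj (Poly_Mapping.lookup u (- n)))"

definition ldeg_hi :: "lpoly \<Rightarrow> ereal" where
  "ldeg_hi u = (if u = 0 then -\<infinity> else ereal (of_int (Max (Poly_Mapping.keys u))))"

text \<open>Lowest degree (only meaningful for nonzero u).\<close>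
definition ldeg_lo :: "lpoly \<Rightarrow> int" where
  "ldeg_lo u = Min (Poly_Mapping.keys u)"

definition llen :: "lpoly \<Rightarrow> ereal" where
  "llen u = (if u = 0 then -\<infinity> else ereal (of_int (Max (Poly_Mapping.keys u) - Min (Poly_Mapping.keys u))))"

definition lfs :: "lpoly \<Rightarrow> int set" where
  "lfs u = (if u = 0 then {} else {Min (Poly_Mapping.keys u) .. Max (Poly_Mapping.keys u)})"

text \<open>k x k matrices and vectors are indexed by 0..k-1.\<close>
definition hermite :: "nat \<Rightarrow> (nat \<Rightarrow> nat \<Rightarrow> lpoly) \<Rightarrow> bool" where
  "hermite k Q \<longleftrightarrow> (\<forall>i<k. \<forall>j<k. lstar (Q j i) = Q i j)"

definition diag_dominant_at :: "nat \<Rightarrow> (nat \<Rightarrow> nat \<Rightarrow> lpoly) \<Rightarrow> nat \<Rightarrow> bool" where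
  "diag_dominant_at k Q s \<longleftrightarrow>
     (\<forall>i<k. i \<noteq> s \<longrightarrow> lfs (Q i s) \<subset> lfs (Q s s) \<and> lfs (Q s i) \<subset> lfs (Q s s)) \<and>
     (\<forall>i<k. s < i \<longrightarrow> ldeg_hi (Q s i) < ldeg_hi (Q s s))"

definition diag_dominant :: "nat \<Rightarrow> (nat \<Rightarrow> nat \<Rightarrow> lpoly) \<Rightarrow> bool" where
  "diag_dominant k Q \<longleftrightarrow> (\<forall>s<k. diag_dominant_at k Q s)"

definition mat_vec :: "nat \<Rightarrow> (nat \<Rightarrow> nat \<Rightarrow> lpoly) \<Rightarrow> (nat \<Rightarrow> lpoly) \<Rightarrow> nat \<Rightarrow> lpoly" where
  "mat_vec k Q X l = (\<Sum>j<k. Q l j * X j)"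

end

theory Submission
  imports Defs
begin

text \<open>Write \<open>L\<^sub>i\<close> and \<open>D\<^sub>i\<close> for the lowest and highest degree of \<open>Q\<^sub>i\<^sub>i\<close>. The remainder is
  produced by long division from the top: at level \<open>e \<ge> 0\<close>, for \<open>l = 1, \<dots>, k\<close> in turn,
  subtracting \<open>c z\<^sup>e\<close> times the \<open>l\<close>-th column of \<open>Q\<close> kills the coefficient of degree \<open>D\<^sub>l + e\<close>
  in \<open>Y\<^sub>l\<close>. Diagonal dominance of row \<open>i\<close> keeps every \<open>Q\<^sub>i\<^sub>l\<close> inside \<open>[L\<^sub>i, D\<^sub>i]\<close> and, for
  \<open>i < l\<close>, strictly below \<open>D\<^sub>i\<close>; so no row leaves its window \<open>[L\<^sub>i, D\<^sub>i + e]\<close> and rows already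
  cleared at level \<open>e\<close> stay cleared. The hypothesis on \<open>ldeg(b)\<close> puts \<open>b\<close> into such windows
  to begin with.\<close>

lemma lookup_mult_single_shift:
  fixes p :: "'a::cancel_comm_monoid_add \<Rightarrow>\<^sub>0 'b::comm_semiring_0"
  shows "Poly_Mapping.lookup (p * Poly_Mapping.single e c) (n + e) = Poly_Mapping.lookup p n * c"
proof -
  have inner: "(\<Sum>q. Poly_Mapping.lookup (Poly_Mapping.single e c) q when n + e = l + q) = (c when l = n)"
    for l :: 'a
  proof -
    have "(\<Sum>q. Poly_Mapping.lookup (Poly_Mapping.single e c) q when n + e = l + q)
        = (\<Sum>q. (c when l = n) when q = e)"
      by (intro Sum_any.cong) (auto simp: lookup_single when_def)
    then show ?thesis by simp
  qed
  show ?thesis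
    by (simp add: lookup_mult inner mult_when)
qed

lemma keys_mult_single_subset:
  fixes p :: "'a::comm_monoid_add \<Rightarrow>\<^sub>0 'b::comm_semiring_0"
  shows "Poly_Mapping.keys (p * Poly_Mapping.single e c) \<subseteq> (\<lambda>n. n + e) ` Poly_Mapping.keys p"
  using keys_mult[of p "Poly_Mapping.single e c"] by (auto split: if_splits)

lemma keys_subset_lfs: "Poly_Mapping.keys p \<subseteq> lfs p"
  by (auto simp: lfs_def Min_le Max_ge)

lemma keys_subset_lessThan_if_ldeg_hi_less:
  assumes "ldeg_hi p < ldeg_hi q"
  shows "Poly_Mapping.keys p \<subseteq> {..<Max (Poly_Mapping.keys q)}"
proof
  fix n assume n: "n \<in> Poly_Mapping.keys p"
  then have "p \<noteq> 0" by auto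
  with assms have "q \<noteq> 0" by (auto simp: ldeg_hi_def)
  with assms \<open>p \<noteq> 0\<close> have "Max (Poly_Mapping.keys p) < Max (Poly_Mapping.keys q)"
    by (simp add: ldeg_hi_def)
  with Max_ge[OF finite_keys n] show "n \<in> {..<Max (Poly_Mapping.keys q)}" by simp
qed

lemma lfs_psubset_and_ldeg_hi_less:
  assumes "q \<noteq> 0"
    and keys_y: "Poly_Mapping.keys y \<subseteq> {Min (Poly_Mapping.keys q)..<Max (Poly_Mapping.keys q)}"
  shows "lfs y \<subset> lfs q \<and> ldeg_hi y < ldeg_hi q"
proof -
  have top_q: "Max (Poly_Mapping.keys q) \<in> lfs q"
    using assms(1) by (simp add: lfs_def Min_le)
  show ?thesis
  proof (cases "y = 0")
    case True
    with top_q assms(1) show ?thesis by (auto simp: lfs_def ldeg_hi_def)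
  next
    case False
    then have "Min (Poly_Mapping.keys y) \<in> Poly_Mapping.keys y" "Max (Poly_Mapping.keys y) \<in> Poly_Mapping.keys y"
      by simp_all
    with keys_y have min_y: "Min (Poly_Mapping.keys q) \<le> Min (Poly_Mapping.keys y)"
      and max_y: "Max (Poly_Mapping.keys y) < Max (Poly_Mapping.keys q)"
      by (meson atLeastLessThan_iff subsetD)+
    have intervals: "{a..b} \<subseteq> {c..d}" "d \<notin> {a..b}" if "c \<le> a" "b < d" for a b c d :: int
      using that by auto
    have "lfs y \<subseteq> lfs q" "Max (Poly_Mapping.keys q) \<notin> lfs y"
      using False assms(1) intervals[OF min_y max_y] by (simp_all add: lfs_def)
    with top_q have "lfs y \<subset> lfs q" by blast
    moreover have "ldeg_hi y < ldeg_hi q"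
      using False assms(1) max_y by (simp add: ldeg_hi_def)
    ultimately show ?thesis ..
  qed
qed

lemma mat_vec_diff_diff:
  "Y - mat_vec k Q X l - mat_vec k Q X' l = Y - mat_vec k Q (\<lambda>j. X j + X' j) l"
  by (simp add: mat_vec_def distrib_left sum.distrib algebra_simps)

lemma mat_vec_single:
  assumes "l < k"
  shows "mat_vec k Q (\<lambda>j. if j = l then s else 0) i = Q i l * s"
  using assms by (simp add: mat_vec_def if_distrib cong: if_cong)

lemma diag_dominant_diag_nonzero:
  assumes dd: "diag_dominant k Q" and nonzero: "\<exists>i<k. \<exists>j<k. Q i j \<noteq> 0" and "l < k"
  shows "Q l l \<noteq> 0"
proof (cases "\<exists>j<k. j \<noteq> l")
  case True
  then obtain j where "j < k" "j \<noteq> l" by blast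
  with dd \<open>l < k\<close> have "lfs (Q j l) \<subset> lfs (Q l l)"
    by (simp add: diag_dominant_def diag_dominant_at_def)
  then show ?thesis by (auto simp: lfs_def)
next
  case False
  with nonzero \<open>l < k\<close> show ?thesis by metis
qed

locale row_windows =
  fixes k :: nat and Q :: "nat \<Rightarrow> nat \<Rightarrow> lpoly" and L D :: "nat \<Rightarrow> int"
  assumes keys_entry: "i < k \<Longrightarrow> l < k \<Longrightarrow> Poly_Mapping.keys (Q i l) \<subseteq> {L i..D i}"
    and keys_entry_right: "i < l \<Longrightarrow> l < k \<Longrightarrow> Poly_Mapping.keys (Q i l) \<subseteq> {..<D i}"
    and lookup_diag_top: "l < k \<Longrightarrow> Poly_Mapping.lookup (Q l l) (D l) \<noteq> 0"
begin

definition level_windows :: "int \<Rightarrow> nat \<Rightarrow> (nat \<Rightarrow> lpoly) \<Rightarrow> bool" where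
  "level_windows e l Y \<longleftrightarrow>
     (\<forall>i<k. Poly_Mapping.keys (Y i) \<subseteq> {L i..D i + e}) \<and>
     (\<forall>i<l. Poly_Mapping.keys (Y i) \<subseteq> {L i..<D i + e})"

lemma eliminate_top_coefficient:
  assumes "0 \<le> e" "l < k" and "level_windows e l Y"
  shows "\<exists>X. level_windows e (Suc l) (\<lambda>i. Y i - mat_vec k Q X i)"
proof -
  from \<open>level_windows e l Y\<close>
  have window: "\<forall>i<k. Poly_Mapping.keys (Y i) \<subseteq> {L i..D i + e}"
    and cleared: "\<forall>i<l. Poly_Mapping.keys (Y i) \<subseteq> {L i..<D i + e}"
    by (simp_all add: level_windows_def)
  define c where "c = Poly_Mapping.lookup (Y l) (D l + e) / Poly_Mapping.lookup (Q l l) (D l)"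
  define X where "X = (\<lambda>j. if j = l then Poly_Mapping.single e c else 0)"
  have MX: "mat_vec k Q X i = Q i l * Poly_Mapping.single e c" for i
    unfolding X_def using mat_vec_single[OF \<open>l < k\<close>] .
  have keys_new: "Poly_Mapping.keys (Y i - mat_vec k Q X i)
      \<subseteq> Poly_Mapping.keys (Y i) \<union> (\<lambda>n. n + e) ` Poly_Mapping.keys (Q i l)" for i
    using keys_diff[of "Y i"] keys_mult_single_subset[of "Q i l" e c] unfolding MX by blast
  have in_window: "Poly_Mapping.keys (Y i - mat_vec k Q X i) \<subseteq> {L i..D i + e}" if "i < k" for i
  proof -
    have "(\<lambda>n. n + e) ` Poly_Mapping.keys (Q i l) \<subseteq> {L i..D i + e}"
      using keys_entry[OF that \<open>l < k\<close>] \<open>0 \<le> e\<close> by auto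
    with keys_new[of i] window that show ?thesis by blast
  qed
  have "Poly_Mapping.keys (Y i - mat_vec k Q X i) \<subseteq> {L i..<D i + e}" if "i < Suc l" for i
  proof (cases "i = l")
    case True
    have "Poly_Mapping.lookup (Y l - mat_vec k Q X l) (D l + e) = 0"
      using lookup_diag_top[OF \<open>l < k\<close>]
      by (simp add: MX lookup_minus lookup_mult_single_shift c_def)
    then have "D l + e \<notin> Poly_Mapping.keys (Y l - mat_vec k Q X l)"
      by (simp add: in_keys_iff)
    with in_window[OF \<open>l < k\<close>] True show ?thesis by (auto simp: subset_iff less_le)
  next
    case False
    with that have "i < l" by simp
    then have "(\<lambda>n. n + e) ` Poly_Mapping.keys (Q i l) \<subseteq> {L i..<D i + e}"
      using keys_entry[of i l] keys_entry_right[of i l] \<open>l < k\<close> \<open>0 \<le> e\<close> by fastforce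
    with keys_new[of i] cleared \<open>i < l\<close> show ?thesis by blast
  qed
  with in_window show ?thesis
    unfolding level_windows_def by blast
qed

lemma eliminate_top_coefficients:
  assumes "0 \<le> e" "l \<le> k" and "level_windows e 0 Y"
  shows "\<exists>X. level_windows e l (\<lambda>i. Y i - mat_vec k Q X i)"
  using \<open>l \<le> k\<close>
proof (induction l)
  case 0
  have "(\<lambda>i. Y i - mat_vec k Q (\<lambda>_. 0) i) = Y"
    by (simp add: mat_vec_def)
  with \<open>level_windows e 0 Y\<close> show ?case by metis
next
  case (Suc l)
  then obtain X where "level_windows e l (\<lambda>i. Y i - mat_vec k Q X i)"
    by auto
  with \<open>0 \<le> e\<close> Suc.prems obtain X' where
    "level_windows e (Suc l) (\<lambda>i. Y i - mat_vec k Q X i - mat_vec k Q X' i)"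
    using eliminate_top_coefficient by (metis Suc_le_lessD)
  then show ?case unfolding mat_vec_diff_diff by blast
qed

lemma reduce_into_windows:
  assumes "\<forall>i<k. Poly_Mapping.keys (Y i) \<subseteq> {L i..<D i + int n}"
  shows "\<exists>X. \<forall>i<k. Poly_Mapping.keys (Y i - mat_vec k Q X i) \<subseteq> {L i..<D i}"
  using assms
proof (induction n arbitrary: Y)
  case 0
  have "(\<lambda>i. Y i - mat_vec k Q (\<lambda>_. 0) i) = Y"
    by (simp add: mat_vec_def)
  with "0.prems" show ?case by (metis add.right_neutral of_nat_0)
next
  case (Suc n)
  have "{L i..<D i + int (Suc n)} = {L i..D i + int n}" for i
    by auto
  with Suc.prems have "level_windows (int n) 0 Y"
    by (simp add: level_windows_def)
  then obtain X where "level_windows (int n) k (\<lambda>i. Y i - mat_vec k Q X i)"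
    using eliminate_top_coefficients[of "int n" k] by auto
  then obtain X' where
    "\<forall>i<k. Poly_Mapping.keys (Y i - mat_vec k Q X i - mat_vec k Q X' i) \<subseteq> {L i..<D i}"
    using Suc.IH[of "\<lambda>i. Y i - mat_vec k Q X i"] by (auto simp: level_windows_def)
  then show ?case unfolding mat_vec_diff_diff by blast
qed

end

lemma row_windows_if_diag_dominant:
  assumes dd: "diag_dominant k Q" and diag_nonzero: "\<forall>l<k. Q l l \<noteq> 0"
  shows "row_windows k Q (\<lambda>i. Min (Poly_Mapping.keys (Q i i))) (\<lambda>i. Max (Poly_Mapping.keys (Q i i)))"
proof
  fix i l assume "i < k" "l < k"
  have "lfs (Q i l) \<subseteq> lfs (Q i i)"
    using dd \<open>i < k\<close> \<open>l < k\<close> by (cases "l = i") (auto simp: diag_dominant_def diag_dominant_at_def)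
  with keys_subset_lfs[of "Q i l"] diag_nonzero \<open>i < k\<close>
  show "Poly_Mapping.keys (Q i l) \<subseteq> {Min (Poly_Mapping.keys (Q i i))..Max (Poly_Mapping.keys (Q i i))}"
    by (simp add: lfs_def)
next
  fix i l assume "i < l" "l < k"
  with dd have "ldeg_hi (Q i l) < ldeg_hi (Q i i)"
    by (simp add: diag_dominant_def diag_dominant_at_def)
  then show "Poly_Mapping.keys (Q i l) \<subseteq> {..<Max (Poly_Mapping.keys (Q i i))}"
    by (rule keys_subset_lessThan_if_ldeg_hi_less)
next
  fix l assume "l < k"
  with diag_nonzero have "Poly_Mapping.keys (Q l l) \<noteq> {}" by simp
  then show "Poly_Mapping.lookup (Q l l) (Max (Poly_Mapping.keys (Q l l))) \<noteq> 0"
    using Max_in[OF finite_keys] by (simp add: in_keys_iff)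
qed

lemma ex_keys_subset_windows:
  fixes k :: nat and b :: "nat \<Rightarrow> lpoly"
  assumes "\<forall>i<k. b i \<noteq> 0 \<longrightarrow> L i \<le> ldeg_lo (b i)"
  shows "\<exists>N. \<forall>i<k. Poly_Mapping.keys (b i) \<subseteq> {L i..<D i + int N}"
proof -
  define n where "n i = nat (Max (insert (D i) (Poly_Mapping.keys (b i))) - D i + 1)" for i
  have "\<forall>i<k. Poly_Mapping.keys (b i) \<subseteq> {L i..<D i + int (\<Sum>j<k. n j)}"
  proof (intro allI impI subsetI)
    fix i m assume "i < k" "m \<in> Poly_Mapping.keys (b i)"
    then have "L i \<le> m"
      using assms Min_le[OF finite_keys] by (force simp: ldeg_lo_def)
    moreover have "m < D i + int (n i)"
      using \<open>m \<in> Poly_Mapping.keys (b i)\<close> by (auto simp: n_def Max_ge)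
    moreover have "int (n i) \<le> int (\<Sum>j<k. n j)"
      using \<open>i < k\<close> by (simp only: of_nat_le_iff) (intro member_le_sum, auto)
    ultimately show "m \<in> {L i..<D i + int (\<Sum>j<k. n j)}"
      by simp
  qed
  then show ?thesis ..
qed

theorem lemmaA1:
  fixes k :: nat and Q :: "nat \<Rightarrow> nat \<Rightarrow> lpoly" and b :: "nat \<Rightarrow> lpoly"
  assumes nonzero: "\<exists>i<k. \<exists>j<k. Q i j \<noteq> 0"
    and herm: "hermite k Q"
    and dd: "diag_dominant k Q"
    and len_mono: "\<forall>i<k. \<forall>j<k. i \<le> j \<longrightarrow> llen (Q i i) \<le> llen (Q j j)"
    and b_ldeg: "\<forall>l<k. b l \<noteq> 0 \<longrightarrow> ldeg_lo (b l) \<ge> ldeg_lo (Q l l)"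
  shows "\<exists>X :: nat \<Rightarrow> lpoly. \<forall>l<k.
           lfs (b l - mat_vec k Q X l) \<subset> lfs (Q l l) \<and>
           ldeg_hi (b l - mat_vec k Q X l) < ldeg_hi (Q l l)"
proof -
  define L where "L i = Min (Poly_Mapping.keys (Q i i))" for i
  define D where "D i = Max (Poly_Mapping.keys (Q i i))" for i
  have diag_nonzero: "\<forall>l<k. Q l l \<noteq> 0"
    using diag_dominant_diag_nonzero[OF dd nonzero] by blast
  then interpret row_windows k Q L D
    unfolding L_def D_def using dd by (intro row_windows_if_diag_dominant)
  have "\<forall>i<k. b i \<noteq> 0 \<longrightarrow> L i \<le> ldeg_lo (b i)"
    using b_ldeg by (simp add: L_def ldeg_lo_def)
  then obtain N where "\<forall>i<k. Poly_Mapping.keys (b i) \<subseteq> {L i..<D i + int N}"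
    using ex_keys_subset_windows by blast
  then obtain X where "\<forall>i<k. Poly_Mapping.keys (b i - mat_vec k Q X i) \<subseteq> {L i..<D i}"
    using reduce_into_windows by blast
  then show ?thesis
    using lfs_psubset_and_ldeg_hi_less diag_nonzero unfolding L_def D_def by blast
qed

end
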